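(* Let $\beta$, $\Omega$, $\mathcal H_\eta$ and $a_{s\beta,\eta}$ be as in the context. There is $\varepsilon(\beta)\in(0,1)$ such that for all $\varepsilon\in(0,\varepsilon(\beta))$, $\eta\in[-\pi,\pi]$ and $U\in\mathcal H_\eta$, $$a_{\varepsilon\beta,\eta}[U]\ge\tfrac12\|\nabla U\|_\Omega^2.$$
   Context: $\omega\subset\mathbb{R}^2$ is a bounded domain with piecewise $C^2$ boundary without cusps; $\gamma_D\subset\partial\omega$ is a finite union of arcs of positive measure. $\partial_\varphi=x_1\partial_2-x_2\partial_1$. $\beta\in C^2(\mathbb{R})$ has positive $1$-periodic derivative $\dot\beta$. $\Omega=\omega\times(0,1)$; for $\eta\in[-\pi,\pi]$, $\mathcal H_\eta$ is the space of $U\in H^1(\Omega)$ vanishing on $\gamma_D\times(0,1)$ with $U(x',1)=e^{i\eta}U(x',0)$. For $s\in\mathbb{R}$, $a_{s\beta,\eta}[U]=\int_\Omega\big(|\nabla'U|^2+|(\partial_3+s\dot\beta(x_3)\partial_\varphi)U|^2\big)\mathrm{d}x$, $U\in\mathcal H_\eta$; $\|\cdot\|_\Omega$ is the $L^2(\Omega)$ norm. *)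

theory Defs
  imports "HOL-Analysis.Analysis"
begin

fun Ck :: "nat \<Rightarrow> ('a::real_normed_vector \<Rightarrow> 'b::real_normed_vector) \<Rightarrow> bool" where
  "Ck 0 f = continuous_on UNIV f"
| "Ck (Suc k) f = ((\<forall>x. f differentiable (at x)) \<and>
                    (\<forall>e. Ck k (\<lambda>x. frechet_derivative f (at x) e)))"

definition smooth_fun :: "('a::real_normed_vector \<Rightarrow> 'b::real_normed_vector) \<Rightarrow> bool" where
  "smooth_fun f \<longleftrightarrow> (\<forall>k. Ck k f)"

definition pd :: "('a::real_normed_vector \<Rightarrow> 'b::real_normed_vector) \<Rightarrow> 'a \<Rightarrow> 'a \<Rightarrow> 'b" where
  "pd f e x = frechet_derivative f (at x) e"

text \<open>A regular, piecewise C^2 simple closed curve on [0,1] without cusps: breakpoints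
  p 0 = 0 < p 1 < ... < p m = 1, on [p k, p (k+1)] the curve coincides with a C^2 map
  f k having non-vanishing derivative; at each breakpoint (including the closing point
  0 = 1) the one-sided tangents are not opposite (no cusp).\<close>
definition pw_C2_closed_curve :: "(real \<Rightarrow> real^2) \<Rightarrow> bool" where
  "pw_C2_closed_curve c \<longleftrightarrow> simple_path c \<and> pathstart c = pathfinish c \<and>
     (\<exists>m::nat. \<exists>p::nat \<Rightarrow> real. \<exists>f::nat \<Rightarrow> real \<Rightarrow> real^2.
        m \<ge> 1 \<and> p 0 = 0 \<and> p m = 1 \<and> (\<forall>k<m. p k < p (Suc k)) \<and>
        (\<forall>k<m. Ck 2 (f k) \<and>
               (\<forall>t\<in>{p k..p (Suc k)}. c t = f k t \<and> vector_derivative (f k) (at t) \<noteq> 0)) \<and>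
        (\<forall>k. 1 \<le> k \<and> k < m \<longrightarrow>
            \<not> (\<exists>l>0. vector_derivative (f (k - 1)) (at (p k))
                      = - l *\<^sub>R vector_derivative (f k) (at (p k)))) \<and>
        \<not> (\<exists>l>0. vector_derivative (f (m - 1)) (at 1) = - l *\<^sub>R vector_derivative (f 0) (at 0)))"

text \<open>The standing assumptions: omega is a bounded domain whose boundary is a finite
  disjoint union of regular piecewise C^2 closed curves without cusps, and gamma_D is a
  (nonempty) finite union of nondegenerate arcs of these boundary curves.\<close>
definition admissible_domain :: "(real^2) set \<Rightarrow> (real^2) set \<Rightarrow> bool" where
  "admissible_domain \<omega> \<gamma>D \<longleftrightarrow>
     open \<omega> \<and> connected \<omega> \<and> bounded \<omega> \<and> \<omega> \<noteq> {} \<and>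
     (\<exists>N::nat. \<exists>c::nat \<Rightarrow> real \<Rightarrow> real^2.
        N \<ge> 1 \<and> (\<forall>i<N. pw_C2_closed_curve (c i)) \<and>
        (\<forall>i<N. \<forall>j<N. i \<noteq> j \<longrightarrow> path_image (c i) \<inter> path_image (c j) = {}) \<and>
        frontier \<omega> = (\<Union>i<N. path_image (c i)) \<and>
        (\<exists>M::nat. \<exists>I::nat \<Rightarrow> nat. \<exists>a b :: nat \<Rightarrow> real.
           M \<ge> 1 \<and> (\<forall>j<M. I j < N \<and> a j < b j \<and> b j \<le> a j + 1) \<and>
           \<gamma>D = (\<Union>j<M. (\<lambda>t. c (I j) (frac t)) ` {a j..b j})))"

type_synonym pt = "(real^2) \<times> real"

definition Cyl :: "(real^2) set \<Rightarrow> pt set" where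
  "Cyl \<omega> = \<omega> \<times> {0<..<1}"

definition e1 :: pt where "e1 = (axis 1 1, 0)"
definition e2 :: pt where "e2 = (axis 2 1, 0)"
definition e3 :: pt where "e3 = (0, 1)"

definition L2_on :: "pt set \<Rightarrow> (pt \<Rightarrow> complex) \<Rightarrow> bool" where
  "L2_on \<Omega> U \<longleftrightarrow> set_borel_measurable lborel \<Omega> U \<and>
                   set_integrable lborel \<Omega> (\<lambda>x. (cmod (U x))\<^sup>2)"

definition test_fun :: "pt set \<Rightarrow> (pt \<Rightarrow> real) \<Rightarrow> bool" where
  "test_fun \<Omega> \<phi> \<longleftrightarrow> smooth_fun \<phi> \<and> compact (closure {x. \<phi> x \<noteq> 0}) \<and>
                      closure {x. \<phi> x \<noteq> 0} \<subseteq> \<Omega>"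

definition weak_deriv :: "pt set \<Rightarrow> (pt \<Rightarrow> complex) \<Rightarrow> pt \<Rightarrow> (pt \<Rightarrow> complex) \<Rightarrow> bool" where
  "weak_deriv \<Omega> U e g \<longleftrightarrow>
     (\<forall>\<phi>. test_fun \<Omega> \<phi> \<longrightarrow>
        (LINT x:\<Omega>|lborel. U x * complex_of_real (pd \<phi> e x))
          = - (LINT x:\<Omega>|lborel. g x * complex_of_real (\<phi> x)))"

definition H1_grad :: "pt set \<Rightarrow> (pt \<Rightarrow> complex) \<Rightarrow> (pt \<Rightarrow> complex) \<Rightarrow> (pt \<Rightarrow> complex)
                        \<Rightarrow> (pt \<Rightarrow> complex) \<Rightarrow> bool" where
  "H1_grad \<Omega> U G1 G2 G3 \<longleftrightarrow> L2_on \<Omega> U \<and> L2_on \<Omega> G1 \<and> L2_on \<Omega> G2 \<and> L2_on \<Omega> G3 \<and>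
     weak_deriv \<Omega> U e1 G1 \<and> weak_deriv \<Omega> U e2 G2 \<and> weak_deriv \<Omega> U e3 G3"

text \<open>The space H_eta: elements of H^1(\<Omega>) which are H^1-limits of smooth functions
  vanishing on gamma_D x [0,1] and satisfying u(x',1) = e^{i eta} u(x',0); i.e. whose
  traces vanish on gamma_D x (0,1) and satisfy the quasi-periodicity condition.\<close>
definition H_eta :: "(real^2) set \<Rightarrow> (real^2) set \<Rightarrow> real \<Rightarrow> (pt \<Rightarrow> complex) set" where
  "H_eta \<omega> \<gamma>D \<eta> = {U. \<exists>G1 G2 G3. H1_grad (Cyl \<omega>) U G1 G2 G3 \<and>
     (\<exists>u :: nat \<Rightarrow> pt \<Rightarrow> complex.
        (\<forall>n. smooth_fun (u n) \<and>
             (\<forall>y\<in>\<gamma>D. \<forall>t\<in>{0..1}. u n (y, t) = 0) \<and>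
             (\<forall>y\<in>closure \<omega>. u n (y, 1) = cis \<eta> * u n (y, 0))) \<and>
        (\<lambda>n. (LINT x:Cyl \<omega>|lborel. (cmod (u n x - U x))\<^sup>2)
           + (LINT x:Cyl \<omega>|lborel. (cmod (pd (u n) e1 x - G1 x))\<^sup>2)
           + (LINT x:Cyl \<omega>|lborel. (cmod (pd (u n) e2 x - G2 x))\<^sup>2)
           + (LINT x:Cyl \<omega>|lborel. (cmod (pd (u n) e3 x - G3 x))\<^sup>2)) \<longlonglongrightarrow> 0)}"

text \<open>The quadratic form a_{s beta, eta}[U], written through the weak gradient (G1,G2,G3),
  with \<partial>_phi U = x1 G2 - x2 G1; bd is the derivative \<dot>\<beta>.\<close>
definition a_form :: "(real^2) set \<Rightarrow> real \<Rightarrow> (real \<Rightarrow> real) \<Rightarrow> (pt \<Rightarrow> complex)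
                       \<Rightarrow> (pt \<Rightarrow> complex) \<Rightarrow> (pt \<Rightarrow> complex) \<Rightarrow> real" where
  "a_form \<omega> s bd G1 G2 G3 = (LINT x:Cyl \<omega>|lborel.
      (cmod (G1 x))\<^sup>2 + (cmod (G2 x))\<^sup>2 +
      (cmod (G3 x + complex_of_real (s * bd (snd x)) *
               (complex_of_real (fst x $ 1) * G2 x - complex_of_real (fst x $ 2) * G1 x)))\<^sup>2)"

definition grad_norm_sq :: "(real^2) set \<Rightarrow> (pt \<Rightarrow> complex) \<Rightarrow> (pt \<Rightarrow> complex)
                             \<Rightarrow> (pt \<Rightarrow> complex) \<Rightarrow> real" where
  "grad_norm_sq \<omega> G1 G2 G3 =
     (LINT x:Cyl \<omega>|lborel. (cmod (G1 x))\<^sup>2 + (cmod (G2 x))\<^sup>2 + (cmod (G3 x))\<^sup>2)"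

end

theory Submission
  imports Defs
begin

text \<open>On the cylinder the transversal variable is bounded, \<open>|x'| \<le> R\<close>, and the derivative
  of \<open>\<beta>\<close> is bounded on \<open>[0,1]\<close>, so for small \<open>\<epsilon>\<close> the twist term
  \<open>\<epsilon> \<beta>'(x\<^sub>3) (x\<^sub>1 \<partial>\<^sub>2 U - x\<^sub>2 \<partial>\<^sub>1 U)\<close> has pointwise square at most half of
  \<open>|\<nabla>'U|\<^sup>2\<close>. The elementary inequality \<open>|p|\<^sup>2 \<le> 2|p + q|\<^sup>2 + 2|q|\<^sup>2\<close> then bounds
  \<open>|\<nabla>U|\<^sup>2\<close> pointwise by twice the integrand of the form, and integration gives the claim.\<close>

lemma norm_add_power2_le:
  fixes x y :: "'a::real_normed_vector"
  shows "(norm (x + y))\<^sup>2 \<le> 2 * (norm x)\<^sup>2 + 2 * (norm y)\<^sup>2"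
proof -
  have "(norm (x + y))\<^sup>2 \<le> (norm x + norm y)\<^sup>2"
    by (simp add: norm_triangle_ineq power_mono)
  also have "\<dots> \<le> 2 * (norm x)\<^sup>2 + 2 * (norm y)\<^sup>2"
    using zero_le_power2[of "norm x - norm y"] by (simp add: power2_eq_square algebra_simps)
  finally show ?thesis .
qed

lemma norm_scaleR_diff_power2_le:
  fixes u v :: "'a::real_normed_vector"
  assumes "\<bar>a\<bar> \<le> 1/2" "\<bar>b\<bar> \<le> 1/2"
  shows "(norm (a *\<^sub>R u - b *\<^sub>R v))\<^sup>2 \<le> ((norm u)\<^sup>2 + (norm v)\<^sup>2) / 2"
proof -
  have "a\<^sup>2 \<le> 1/4" "b\<^sup>2 \<le> 1/4"
    using power_mono[OF assms(1), of 2] power_mono[OF assms(2), of 2] by (simp_all add: power_divide)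
  then have "2 * (a\<^sup>2 * (norm u)\<^sup>2) + 2 * (b\<^sup>2 * (norm v)\<^sup>2)
      \<le> 2 * (1/4 * (norm u)\<^sup>2) + 2 * (1/4 * (norm v)\<^sup>2)"
    by (intro add_mono mult_left_mono mult_right_mono) simp_all
  moreover have "(norm (a *\<^sub>R u - b *\<^sub>R v))\<^sup>2 \<le> 2 * (a\<^sup>2 * (norm u)\<^sup>2) + 2 * (b\<^sup>2 * (norm v)\<^sup>2)"
    using norm_add_power2_le[of "a *\<^sub>R u" "- b *\<^sub>R v"] by (simp add: power_mult_distrib)
  ultimately show ?thesis by simp
qed

lemma norm_power2_sum_perturbed_bounds:
  fixes g1 g2 g3 c :: "'a::real_normed_vector"
  assumes "(norm c)\<^sup>2 \<le> ((norm g1)\<^sup>2 + (norm g2)\<^sup>2) / 2"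
  shows "((norm g1)\<^sup>2 + (norm g2)\<^sup>2 + (norm g3)\<^sup>2) / 2 \<le> (norm g1)\<^sup>2 + (norm g2)\<^sup>2 + (norm (g3 + c))\<^sup>2"
    and "(norm g1)\<^sup>2 + (norm g2)\<^sup>2 + (norm (g3 + c))\<^sup>2 \<le> 2 * ((norm g1)\<^sup>2 + (norm g2)\<^sup>2 + (norm g3)\<^sup>2)"
  using norm_add_power2_le[of "g3 + c" "- c"] norm_add_power2_le[of g3 c] assms by auto

lemma set_integral_mono_dominated:
  fixes f g h :: "_ \<Rightarrow> real"
  assumes "set_integrable M A f" "set_integrable M A h" "set_borel_measurable M A g"
    and "\<And>x. x \<in> A \<Longrightarrow> f x \<le> g x" "\<And>x. x \<in> A \<Longrightarrow> \<bar>g x\<bar> \<le> h x"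
  shows "(LINT x:A|M. f x) \<le> (LINT x:A|M. g x)"
proof (rule set_integral_mono[OF assms(1) _ assms(4)])
  show "set_integrable M A g"
    using assms(5) by (intro set_integrable_bound[OF assms(2,3)] AE_I2) fastforce
qed

lemma cylinder_coefficient_bound:
  fixes \<omega> :: "(real^2) set" and h :: "real \<Rightarrow> real"
  assumes "bounded \<omega>" "continuous_on {0..1} h"
  obtains C where "C > 0" "\<And>x i. x \<in> Cyl \<omega> \<Longrightarrow> \<bar>h (snd x) * fst x $ i\<bar> \<le> C"
proof -
  obtain R where R: "R > 0" "\<And>y. y \<in> \<omega> \<Longrightarrow> norm y \<le> R"
    using assms(1) bounded_pos by blast
  have "bounded (h ` {0..1})"
    by (intro compact_imp_bounded compact_continuous_image assms(2)) simp
  then obtain B where B: "B > 0" "\<And>t. t \<in> {0..1} \<Longrightarrow> \<bar>h t\<bar> \<le> B"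
    by (auto simp: bounded_pos)
  have bound: "\<bar>h (snd x) * fst x $ i\<bar> \<le> B * R" if "x \<in> Cyl \<omega>" for x i
  proof -
    have "fst x \<in> \<omega>" "snd x \<in> {0..1}" using that by (auto simp: Cyl_def)
    then have "\<bar>h (snd x)\<bar> \<le> B" "\<bar>fst x $ i\<bar> \<le> R"
      using B(2) R(2) component_le_norm_cart[of "fst x" i] by force+
    then show ?thesis by (simp add: abs_mult mult_mono)
  qed
  show ?thesis using that[of "B * R"] B(1) R(1) bound by simp
qed

lemma set_borel_measurable_twisted_integrand:
  fixes \<Omega> :: "pt set" and h :: "real \<Rightarrow> real"
  assumes "set_borel_measurable lborel \<Omega> G1" "set_borel_measurable lborel \<Omega> G2"
    "set_borel_measurable lborel \<Omega> G3" "h \<in> borel_measurable borel"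
  shows "set_borel_measurable lborel \<Omega> (\<lambda>x. (cmod (G1 x))\<^sup>2 + (cmod (G2 x))\<^sup>2 +
      (cmod (G3 x + complex_of_real (h (snd x)) *
         (complex_of_real (fst x $ 1) * G2 x - complex_of_real (fst x $ 2) * G1 x)))\<^sup>2)"
proof -
  define H1 H2 H3 where "H1 = (\<lambda>x. indicator \<Omega> x *\<^sub>R G1 x)"
    and "H2 = (\<lambda>x. indicator \<Omega> x *\<^sub>R G2 x)" and "H3 = (\<lambda>x. indicator \<Omega> x *\<^sub>R G3 x)"
  have [measurable]: "H1 \<in> borel_measurable lborel" "H2 \<in> borel_measurable lborel"
    "H3 \<in> borel_measurable lborel"
    using assms(1-3) by (simp_all add: H1_def H2_def H3_def set_borel_measurable_def)
  have [measurable]: "h \<in> borel_measurable borel" by (fact assms(4))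
  have [measurable]: "(\<lambda>x::pt. fst x $ i) \<in> borel_measurable lborel"
    "(\<lambda>x::pt. snd x) \<in> borel_measurable lborel" for i
    unfolding measurable_lborel2 by (intro borel_measurable_continuous_onI continuous_intros)+
  have "(\<lambda>x. (cmod (H1 x))\<^sup>2 + (cmod (H2 x))\<^sup>2 +
      (cmod (H3 x + complex_of_real (h (snd x)) *
         (complex_of_real (fst x $ 1) * H2 x - complex_of_real (fst x $ 2) * H1 x)))\<^sup>2)
      \<in> borel_measurable lborel"
    by measurable
  moreover have "(\<lambda>x. (cmod (H1 x))\<^sup>2 + (cmod (H2 x))\<^sup>2 +
      (cmod (H3 x + complex_of_real (h (snd x)) *
         (complex_of_real (fst x $ 1) * H2 x - complex_of_real (fst x $ 2) * H1 x)))\<^sup>2)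
    = (\<lambda>x. indicator \<Omega> x *\<^sub>R ((cmod (G1 x))\<^sup>2 + (cmod (G2 x))\<^sup>2 +
      (cmod (G3 x + complex_of_real (h (snd x)) *
         (complex_of_real (fst x $ 1) * G2 x - complex_of_real (fst x $ 2) * G1 x)))\<^sup>2))"
    by (simp add: H1_def H2_def H3_def indicator_def fun_eq_iff)
  ultimately show ?thesis
    unfolding set_borel_measurable_def by simp
qed

lemma a_form_ge_half_grad_norm_sq:
  fixes \<omega> :: "(real^2) set" and s :: real and bd :: "real \<Rightarrow> real"
    and G1 G2 G3 :: "pt \<Rightarrow> complex"
  assumes "L2_on (Cyl \<omega>) G1" "L2_on (Cyl \<omega>) G2" "L2_on (Cyl \<omega>) G3"
    and "bd \<in> borel_measurable borel"
    and small: "\<And>x i. x \<in> Cyl \<omega> \<Longrightarrow> \<bar>s * bd (snd x) * fst x $ i\<bar> \<le> 1/2"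
  shows "a_form \<omega> s bd G1 G2 G3 \<ge> 1/2 * grad_norm_sq \<omega> G1 G2 G3"
proof -
  define f where "f x = (cmod (G1 x))\<^sup>2 + (cmod (G2 x))\<^sup>2 + (cmod (G3 x))\<^sup>2" for x
  define g where "g x = (cmod (G1 x))\<^sup>2 + (cmod (G2 x))\<^sup>2 +
      (cmod (G3 x + complex_of_real (s * bd (snd x)) *
         (complex_of_real (fst x $ 1) * G2 x - complex_of_real (fst x $ 2) * G1 x)))\<^sup>2" for x
  have bounds: "f x / 2 \<le> g x \<and> g x \<le> 2 * f x" if "x \<in> Cyl \<omega>" for x
  proof -
    have "complex_of_real (s * bd (snd x)) *
          (complex_of_real (fst x $ 1) * G2 x - complex_of_real (fst x $ 2) * G1 x)
        = (s * bd (snd x) * fst x $ 1) *\<^sub>R G2 x - (s * bd (snd x) * fst x $ 2) *\<^sub>R G1 x"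
      by (simp add: scaleR_conv_of_real algebra_simps)
    then have "(cmod (complex_of_real (s * bd (snd x)) *
          (complex_of_real (fst x $ 1) * G2 x - complex_of_real (fst x $ 2) * G1 x)))\<^sup>2
        \<le> ((cmod (G1 x))\<^sup>2 + (cmod (G2 x))\<^sup>2) / 2"
      using norm_scaleR_diff_power2_le[OF small[OF that, of 1] small[OF that, of 2], of "G2 x" "G1 x"]
      by (simp add: add.commute)
    from norm_power2_sum_perturbed_bounds[OF this, of "G3 x"] show ?thesis
      unfolding f_def g_def by simp
  qed
  have f_int: "set_integrable lborel (Cyl \<omega>) f"
    using assms(1-3) unfolding f_def L2_on_def by (intro set_integral_add) auto
  have "(LINT x:Cyl \<omega>|lborel. f x / 2) \<le> (LINT x:Cyl \<omega>|lborel. g x)"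
  proof (rule set_integral_mono_dominated)
    have "(\<lambda>t. s * bd t) \<in> borel_measurable borel"
      using assms(4) by measurable
    with assms(1-3) show "set_borel_measurable lborel (Cyl \<omega>) g"
      unfolding g_def L2_on_def
      using set_borel_measurable_twisted_integrand[where h = "\<lambda>t. s * bd t"] by auto
    show "\<bar>g x\<bar> \<le> 2 * f x" if "x \<in> Cyl \<omega>" for x
      using bounds[OF that] by (simp add: g_def)
  qed (use f_int bounds in auto)
  then show ?thesis
    unfolding a_form_def grad_norm_sq_def f_def[symmetric] g_def[symmetric] by simp
qed

theorem corollary3:
  fixes \<omega> \<gamma>D :: "(real^2) set" and \<beta> bd bdd :: "real \<Rightarrow> real"
  assumes "admissible_domain \<omega> \<gamma>D"
    and "\<forall>x. (\<beta> has_real_derivative bd x) (at x)"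
    and "\<forall>x. (bd has_real_derivative bdd x) (at x)"
    and "continuous_on UNIV bdd"
    and "\<forall>x. bd x > 0"
    and "\<forall>x. bd (x + 1) = bd x"
  shows "\<exists>\<epsilon>0. 0 < \<epsilon>0 \<and> \<epsilon>0 < 1 \<and>
    (\<forall>\<epsilon> \<eta> U G1 G2 G3. 0 < \<epsilon> \<and> \<epsilon> < \<epsilon>0 \<and> - pi \<le> \<eta> \<and> \<eta> \<le> pi \<and>
       U \<in> H_eta \<omega> \<gamma>D \<eta> \<and> H1_grad (Cyl \<omega>) U G1 G2 G3 \<longrightarrow>
       a_form \<omega> \<epsilon> bd G1 G2 G3 \<ge> 1/2 * grad_norm_sq \<omega> G1 G2 G3)"
proof -
  have bd_cont: "continuous_on UNIV bd"
    using assms(3) by (meson DERIV_isCont continuous_at_imp_continuous_on)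
  have "bounded \<omega>"
    using assms(1) unfolding admissible_domain_def by blast
  then obtain C where C: "C > 0" "\<And>x i. x \<in> Cyl \<omega> \<Longrightarrow> \<bar>bd (snd x) * fst x $ i\<bar> \<le> C"
    using cylinder_coefficient_bound continuous_on_subset[OF bd_cont] by blast
  define \<epsilon>0 where "\<epsilon>0 = 1 / (2 * (C + 1))"
  have \<epsilon>0: "0 < \<epsilon>0" "\<epsilon>0 < 1" "\<epsilon>0 * C \<le> 1/2"
    using C(1) by (simp_all add: \<epsilon>0_def field_simps)
  have "a_form \<omega> \<epsilon> bd G1 G2 G3 \<ge> 1/2 * grad_norm_sq \<omega> G1 G2 G3"
    if "0 < \<epsilon>" "\<epsilon> < \<epsilon>0" "H1_grad (Cyl \<omega>) U G1 G2 G3" for \<epsilon> U G1 G2 G3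
  proof (rule a_form_ge_half_grad_norm_sq)
    show "L2_on (Cyl \<omega>) G1" "L2_on (Cyl \<omega>) G2" "L2_on (Cyl \<omega>) G3"
      using that(3) unfolding H1_grad_def by simp_all
    show "bd \<in> borel_measurable borel"
      using bd_cont by (rule borel_measurable_continuous_onI)
    show "\<bar>\<epsilon> * bd (snd x) * fst x $ i\<bar> \<le> 1/2" if "x \<in> Cyl \<omega>" for x i
    proof -
      have "\<bar>\<epsilon> * bd (snd x) * fst x $ i\<bar> \<le> \<epsilon> * C"
        using C(2)[OF that, of i] \<open>0 < \<epsilon>\<close> by (simp add: abs_mult mult.assoc mult_left_mono)
      also have "\<dots> \<le> \<epsilon>0 * C"
        using \<open>\<epsilon> < \<epsilon>0\<close> C(1) by simp
      finally show ?thesis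
        using \<epsilon>0(3) by linarith
    qed
  qed
  with \<epsilon>0(1,2) show ?thesis by blast
qed

end
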